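(* Let $(X,d)$ be an arbitrary metric space and let $p\in X$. For $x,y\in X\setminus\{p\}$ define $$\tilde\tau_p(x,y)=\log\Big(1+\frac{d(x,y)}{\sqrt{d(x,p)d(y,p)}}\Big),\qquad \tau_p(x,y)=\log\Big(1+2\frac{d(x,y)}{\sqrt{d(x,p)d(y,p)}}\Big).$$ Then $(X\setminus\{p\},\tilde\tau_p)$ is Gromov hyperbolic with $\delta=\log 3$, and $(X\setminus\{p\},\tau_p)$ is Gromov hyperbolic with $\delta=\log 3+\log 2$.
   Context: A space $(Y,\rho)$ (with $\rho$ a symmetric nonnegative distance function) is Gromov hyperbolic with constant $\delta\ge 0$ if $\rho(x,y)+\rho(z,v)\leq \max\{\rho(x,z)+\rho(y,v),\ \rho(x,v)+\rho(y,z)\}+2\delta$ for all $x,y,z,v\in Y$. *)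

theory Defs
  imports "HOL-Analysis.Analysis"
begin

definition gromov_hyperbolic_on :: "'a set \<Rightarrow> ('a \<Rightarrow> 'a \<Rightarrow> real) \<Rightarrow> real \<Rightarrow> bool" where
  "gromov_hyperbolic_on Y rho \<delta> \<longleftrightarrow> \<delta> \<ge> 0 \<and>
     (\<forall>x\<in>Y. \<forall>y\<in>Y. \<forall>z\<in>Y. \<forall>v\<in>Y.
        rho x y + rho z v \<le> max (rho x z + rho y v) (rho x v + rho y z) + 2 * \<delta>)"

definition tau_tilde :: "'a::metric_space \<Rightarrow> 'a \<Rightarrow> 'a \<Rightarrow> real" where
  "tau_tilde p x y = ln (1 + dist x y / sqrt (dist x p * dist y p))"

definition tau :: "'a::metric_space \<Rightarrow> 'a \<Rightarrow> 'a \<Rightarrow> real" where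
  "tau p x y = ln (1 + 2 * (dist x y / sqrt (dist x p * dist y p)))"

end

theory Submission
  imports Defs
begin

text \<open>With \<open>a = d(x,p)\<close>, \<open>b = d(y,p)\<close> and \<open>c \<ge> 1\<close>, the distance
  \<open>log (1 + c d(x,y) / sqrt(ab))\<close> equals \<open>log (sqrt(ab) + c d(x,y)) - (log a + log b)/2\<close>.
  Subtracting such a point-wise term does not affect the four-point condition, and by the
  triangle inequality \<open>log (sqrt(ab) + c d(x,y))\<close> lies within \<open>log (3c)\<close> above
  \<open>max (log a) (log b)\<close>, which satisfies the four-point condition with constant 0.\<close>

lemma gromov_hyperbolic_on_max:
  fixes h :: "'a \<Rightarrow> real"
  shows "gromov_hyperbolic_on Y (\<lambda>x y. max (h x) (h y)) 0"
  unfolding gromov_hyperbolic_on_def by (auto simp: max_def)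

lemma gromov_hyperbolic_on_perturb:
  assumes hyp: "gromov_hyperbolic_on Y \<rho> \<delta>" and "c \<ge> 0"
    and bounds: "\<And>x y. x \<in> Y \<Longrightarrow> y \<in> Y \<Longrightarrow> \<rho> x y \<le> \<rho>' x y \<and> \<rho>' x y \<le> \<rho> x y + c"
  shows "gromov_hyperbolic_on Y \<rho>' (\<delta> + c)"
  unfolding gromov_hyperbolic_on_def
proof (intro conjI ballI)
  show "0 \<le> \<delta> + c" using hyp \<open>c \<ge> 0\<close> by (simp add: gromov_hyperbolic_on_def)
  fix x y z v assume Y: "x \<in> Y" "y \<in> Y" "z \<in> Y" "v \<in> Y"
  have "\<rho> x y + \<rho> z v \<le> max (\<rho> x z + \<rho> y v) (\<rho> x v + \<rho> y z) + 2 * \<delta>"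
    using hyp Y by (simp add: gromov_hyperbolic_on_def)
  then show "\<rho>' x y + \<rho>' z v \<le> max (\<rho>' x z + \<rho>' y v) (\<rho>' x v + \<rho>' y z) + 2 * (\<delta> + c)"
    using bounds[of x y] bounds[of z v] bounds[of x z] bounds[of y v] bounds[of x v] bounds[of y z] Y
    by (simp add: max_def split: if_splits; linarith)
qed

lemma gromov_hyperbolic_on_shift:
  fixes h :: "'a \<Rightarrow> real"
  assumes hyp: "gromov_hyperbolic_on Y \<rho> \<delta>"
    and shift: "\<And>x y. x \<in> Y \<Longrightarrow> y \<in> Y \<Longrightarrow> \<rho>' x y = \<rho> x y - h x - h y"
  shows "gromov_hyperbolic_on Y \<rho>' \<delta>"
  unfolding gromov_hyperbolic_on_def
proof (intro conjI ballI)
  show "0 \<le> \<delta>" using hyp by (simp add: gromov_hyperbolic_on_def)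
  fix x y z v assume Y: "x \<in> Y" "y \<in> Y" "z \<in> Y" "v \<in> Y"
  have "\<rho> x y + \<rho> z v \<le> max (\<rho> x z + \<rho> y v) (\<rho> x v + \<rho> y z) + 2 * \<delta>"
    using hyp Y by (simp add: gromov_hyperbolic_on_def)
  then show "\<rho>' x y + \<rho>' z v \<le> max (\<rho>' x z + \<rho>' y v) (\<rho>' x v + \<rho>' y z) + 2 * \<delta>"
    using Y by (simp add: shift max_def split: if_splits; linarith)
qed

lemma sqrt_mult_between_min_max:
  fixes a b :: real
  assumes "a \<ge> 0" "b \<ge> 0"
  shows "min a b \<le> sqrt (a * b)" and "sqrt (a * b) \<le> max a b"
proof -
  have "min a b * min a b \<le> a * b" "a * b \<le> max a b * max a b"
    using assms by (auto simp: min_def max_def intro: mult_mono)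
  then have "sqrt (min a b * min a b) \<le> sqrt (a * b)" "sqrt (a * b) \<le> sqrt (max a b * max a b)"
    by (simp_all only: real_sqrt_le_mono)
  then show "min a b \<le> sqrt (a * b)" and "sqrt (a * b) \<le> max a b"
    using assms by (simp_all del: real_sqrt_mult add: real_sqrt_mult_self)
qed

lemma dist_sqrt_add_bounds:
  fixes p :: "'a::metric_space" and c :: real
  assumes "c \<ge> 1"
  shows "max (dist x p) (dist y p) \<le> sqrt (dist x p * dist y p) + c * dist x y"
    and "sqrt (dist x p * dist y p) + c * dist x y \<le> 3 * c * max (dist x p) (dist y p)"
proof -
  define a b d where "a = dist x p" and "b = dist y p" and "d = dist x y"
  have triangle: "a \<le> d + b" "b \<le> d + a" "d \<le> a + b"
    unfolding a_def b_def d_def by (metis dist_commute dist_triangle)+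
  have sqrt_ab: "min a b \<le> sqrt (a * b)" "sqrt (a * b) \<le> max a b"
    using sqrt_mult_between_min_max[of a b] by (simp_all add: a_def b_def)
  have "d \<le> c * d" using assms by (simp add: d_def mult_le_cancel_right1)
  then show "max a b \<le> sqrt (a * b) + c * d"
    using sqrt_ab triangle by (simp add: min_def max_def split: if_splits; linarith)
  have "c * d \<le> c * (2 * max a b)"
    using triangle assms by (intro mult_left_mono) auto
  moreover have "max a b \<le> c * max a b"
    using assms by (simp add: a_def b_def mult_le_cancel_right1)
  ultimately show "sqrt (a * b) + c * d \<le> 3 * c * max a b"
    using sqrt_ab by linarith
qed

lemma ln_one_add_scaled_dist:
  fixes p :: "'a::metric_space" and c :: real
  assumes "x \<noteq> p" "y \<noteq> p" "c \<ge> 0"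
  shows "ln (1 + c * (dist x y / sqrt (dist x p * dist y p)))
       = ln (sqrt (dist x p * dist y p) + c * dist x y) - ln (dist x p) / 2 - ln (dist y p) / 2"
proof -
  define a b d where "a = dist x p" and "b = dist y p" and "d = dist x y"
  have "a > 0" "b > 0" "d \<ge> 0" using assms by (simp_all add: a_def b_def d_def)
  then have pos: "sqrt (a * b) > 0" "sqrt (a * b) + c * d > 0"
    using \<open>c \<ge> 0\<close> by (simp_all add: add_pos_nonneg)
  have "1 + c * (d / sqrt (a * b)) = (sqrt (a * b) + c * d) / sqrt (a * b)"
    using pos \<open>a > 0\<close> \<open>b > 0\<close> by (simp add: add_divide_distrib)
  then have "ln (1 + c * (d / sqrt (a * b))) = ln (sqrt (a * b) + c * d) - ln (sqrt (a * b))"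
    using pos \<open>a > 0\<close> \<open>b > 0\<close> by (simp add: ln_div)
  also have "ln (sqrt (a * b)) = ln a / 2 + ln b / 2"
    using \<open>a > 0\<close> \<open>b > 0\<close> by (simp add: ln_sqrt ln_mult)
  finally show ?thesis by (simp add: a_def b_def d_def)
qed

lemma gromov_hyperbolic_on_ln_scaled_dist:
  fixes p :: "'a::metric_space" and c :: real
  assumes "c \<ge> 1"
  shows "gromov_hyperbolic_on (UNIV - {p})
           (\<lambda>x y. ln (1 + c * (dist x y / sqrt (dist x p * dist y p)))) (ln (3 * c))"
proof -
  let ?G = "\<lambda>x y. ln (sqrt (dist x p * dist y p) + c * dist x y)"
  have "gromov_hyperbolic_on (UNIV - {p}) ?G (0 + ln (3 * c))"
  proof (rule gromov_hyperbolic_on_perturb[OF gromov_hyperbolic_on_max])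
    show "0 \<le> ln (3 * c)" using assms by simp
    fix x y assume "x \<in> UNIV - {p}" "y \<in> UNIV - {p}"
    then have "dist x p > 0" "dist y p > 0" by auto
    then have max_pos: "max (dist x p) (dist y p) > 0"
      and ln_max: "max (ln (dist x p)) (ln (dist y p)) = ln (max (dist x p) (dist y p))"
      by (simp_all add: max_def)
    note bounds = dist_sqrt_add_bounds[OF assms, of x p y]
    have "ln (max (dist x p) (dist y p)) \<le> ?G x y"
      using bounds max_pos by (subst ln_le_cancel_iff) auto
    moreover have "?G x y \<le> ln (3 * c * max (dist x p) (dist y p))"
      using bounds max_pos by (subst ln_le_cancel_iff) auto
    moreover have "ln (3 * c * max (dist x p) (dist y p)) = ln (3 * c) + ln (max (dist x p) (dist y p))"
      using assms max_pos by (simp add: ln_mult)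
    ultimately show "max (ln (dist x p)) (ln (dist y p)) \<le> ?G x y
        \<and> ?G x y \<le> max (ln (dist x p)) (ln (dist y p)) + ln (3 * c)"
      unfolding ln_max by linarith
  qed
  then have "gromov_hyperbolic_on (UNIV - {p}) ?G (ln (3 * c))" by simp
  then show ?thesis
  proof (rule gromov_hyperbolic_on_shift[where h = "\<lambda>x. ln (dist x p) / 2"])
    fix x y assume "x \<in> UNIV - {p}" "y \<in> UNIV - {p}"
    then show "ln (1 + c * (dist x y / sqrt (dist x p * dist y p)))
        = ?G x y - ln (dist x p) / 2 - ln (dist y p) / 2"
      using assms by (intro ln_one_add_scaled_dist) auto
  qed
qed

theorem lemma4p1:
  fixes p :: "'a::metric_space"
  shows "gromov_hyperbolic_on (UNIV - {p}) (tau_tilde p) (ln 3)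
       \<and> gromov_hyperbolic_on (UNIV - {p}) (tau p) (ln 3 + ln 2)"
proof
  show "gromov_hyperbolic_on (UNIV - {p}) (tau_tilde p) (ln 3)"
    using gromov_hyperbolic_on_ln_scaled_dist[of 1 p] by (simp add: tau_tilde_def [abs_def])
  have "ln 6 = ln 3 + ln (2 :: real)" using ln_mult[of 3 2] by simp
  then show "gromov_hyperbolic_on (UNIV - {p}) (tau p) (ln 3 + ln 2)"
    using gromov_hyperbolic_on_ln_scaled_dist[of 2 p] by (simp add: tau_def [abs_def])
qed

end
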